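(* Let $\vec{\alpha}=\langle\alpha_s:s\in[\mathbb{N}]^{<\infty}\rangle$ be a sequence of nonstandard hypernatural numbers. Every subset of $[\mathbb{N}]^\infty$ that is open in the $\vec{\alpha}$-Ellentuck topology is $\vec{\alpha}$-Ramsey.
   Context: Setting (Alpha-Theory of Benci–Di Nasso): ZFC together with a new symbol $\alpha$ satisfying: ($\alpha$1) every sequence $\varphi=\langle\varphi_i:i\in\mathbb{N}\rangle$ has a unique ideal value $\varphi[\alpha]$; ($\alpha$2) if $\varphi[\alpha]=\psi[\alpha]$ and $f\circ\varphi$, $f\circ\psi$ make sense then $(f\circ\varphi)[\alpha]=(f\circ\psi)[\alpha]$; ($\alpha$3) constant real sequences $r$ have ideal value $r$, and $\langle i\rangle$ has ideal value $\alpha\notin\mathbb{N}$; ($\alpha$4) if $\vartheta_i=\{\varphi_i,\psi_i\}$ then $\vartheta[\alpha]=\{\varphi[\alpha],\psi[\alpha]\}$; ($\alpha$5) the constant sequence $\emptyset$ has ideal value $\emptyset$, and for nonempty $\psi_i$, $\psi[\alpha]=\{\vartheta[\alpha]:\vartheta_i\in\psi_i\ \forall i\}$. ${}^*A$ is the ideal value of the constant sequence $A$; elements of ${}^*\mathbb{N}\setminus\mathbb{N}$ are nonstandard hypernatural numbers. For finite $s$, $s\sqsubseteq X$ means $s=\{j\in X:j\le i\}$ for some $i$. A tree on $\mathbb{N}$ is a nonempty $T\subseteq[\mathbb{N}]^{<\infty}$ closed under $\sqsubseteq$-initial segments; $[T]=\{X\in[\mathbb{N}]^\infty:$ every finite $s\sqsubseteq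 X$ is in $T\}$; stem $st(T)$ = $\sqsubseteq$-maximal $s\in T$ comparable with all elements of $T$; $T/s=\{t\in T:s\sqsubseteq t\}$. An $\vec{\alpha}$-tree is a tree $T$ with a stem, $T/st(T)\neq\emptyset$, and $s\cup\{\alpha_s\}\in{}^*T$ for all $s\in T/st(T)$. $\mathcal{X}\subseteq[\mathbb{N}]^\infty$ is $\vec{\alpha}$-Ramsey if for every $\vec{\alpha}$-tree $T$ there is an $\vec{\alpha}$-tree $S\subseteq T$ with $st(S)=st(T)$ and $[S]\subseteq\mathcal{X}$ or $[S]\cap\mathcal{X}=\emptyset$. The $\vec{\alpha}$-Ellentuck topology on $[\mathbb{N}]^\infty$ is the topology with basis $\{[T]:T\text{ an }\vec{\alpha}\text{-tree}\}$. *)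

theory Defs
  imports Main
begin

text \<open>The ideal value alpha determines the
  nonprincipal ultrafilter U = {A. alpha in *A} on the naturals; a hypernatural
  number is the ideal value phi[alpha] of a sequence phi :: nat => nat, and
  phi[alpha] in *A iff {i. phi i in A} in U (more generally psi[alpha] in *T iff
  {i. psi i in T} in U).\<close>

definition nonprincipal_ultrafilter :: "nat set set \<Rightarrow> bool" where
  "nonprincipal_ultrafilter U \<longleftrightarrow>
     UNIV \<in> U \<and> {} \<notin> U \<and>
     (\<forall>A B. A \<in> U \<and> A \<subseteq> B \<longrightarrow> B \<in> U) \<and>
     (\<forall>A B. A \<in> U \<and> B \<in> U \<longrightarrow> A \<inter> B \<in> U) \<and>
     (\<forall>A. A \<in> U \<or> - A \<in> U) \<and>
     (\<forall>n. {n} \<notin> U)"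

definition nonstandard_hypnat :: "nat set set \<Rightarrow> (nat \<Rightarrow> nat) \<Rightarrow> bool" where
  "nonstandard_hypnat U \<phi> \<longleftrightarrow> (\<forall>n. {i. \<phi> i = n} \<notin> U)"

definition initseg :: "nat set \<Rightarrow> nat set \<Rightarrow> bool" (infix "\<sqsubseteq>" 50) where
  "s \<sqsubseteq> X \<longleftrightarrow> finite s \<and> (\<exists>i. s = {j \<in> X. j < i})"

definition is_tree :: "nat set set \<Rightarrow> bool" where
  "is_tree T \<longleftrightarrow> T \<noteq> {} \<and> (\<forall>t\<in>T. finite t) \<and> (\<forall>t\<in>T. \<forall>s. s \<sqsubseteq> t \<longrightarrow> s \<in> T)"

definition body :: "nat set set \<Rightarrow> nat set set" where
  "body T = {X. infinite X \<and> (\<forall>s. finite s \<and> s \<sqsubseteq> X \<longrightarrow> s \<in> T)}"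

definition is_stem :: "nat set set \<Rightarrow> nat set \<Rightarrow> bool" where
  "is_stem T s \<longleftrightarrow> s \<in> T \<and> (\<forall>t\<in>T. s \<sqsubseteq> t \<or> t \<sqsubseteq> s) \<and>
     (\<forall>s'\<in>T. (\<forall>t\<in>T. s' \<sqsubseteq> t \<or> t \<sqsubseteq> s') \<longrightarrow> s' \<sqsubseteq> s)"

definition has_stem :: "nat set set \<Rightarrow> bool" where
  "has_stem T \<longleftrightarrow> (\<exists>s. is_stem T s)"

definition stem :: "nat set set \<Rightarrow> nat set" where
  "stem T = (THE s. is_stem T s)"

definition restr :: "nat set set \<Rightarrow> nat set \<Rightarrow> nat set set" where
  "restr T s = {t \<in> T. s \<sqsubseteq> t}"

text \<open>alpha-tree for the sequence of hypernaturals alpha_s = (\<phi> s)[alpha]: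
  s union {alpha_s} in *T, i.e. {i. s union {\<phi> s i} in T} in U.\<close>
definition alpha_tree :: "nat set set \<Rightarrow> (nat set \<Rightarrow> nat \<Rightarrow> nat) \<Rightarrow> nat set set \<Rightarrow> bool" where
  "alpha_tree U \<phi> T \<longleftrightarrow> is_tree T \<and> has_stem T \<and> restr T (stem T) \<noteq> {} \<and>
     (\<forall>s\<in>restr T (stem T). {i. insert (\<phi> s i) s \<in> T} \<in> U)"

definition alpha_Ramsey :: "nat set set \<Rightarrow> (nat set \<Rightarrow> nat \<Rightarrow> nat) \<Rightarrow> nat set set \<Rightarrow> bool" where
  "alpha_Ramsey U \<phi> \<X> \<longleftrightarrow> (\<forall>T. alpha_tree U \<phi> T \<longrightarrow>
     (\<exists>S. alpha_tree U \<phi> S \<and> S \<subseteq> T \<and> stem S = stem T \<and>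
          (body S \<subseteq> \<X> \<or> body S \<inter> \<X> = {})))"

definition alpha_Ellentuck_open :: "nat set set \<Rightarrow> (nat set \<Rightarrow> nat \<Rightarrow> nat) \<Rightarrow> nat set set \<Rightarrow> bool" where
  "alpha_Ellentuck_open U \<phi> \<O> \<longleftrightarrow>
     (\<exists>\<F>. \<F> \<subseteq> {body T | T. alpha_tree U \<phi> T} \<and> \<O> = \<Union>\<F>)"

end

theory Submission
  imports Defs
begin

text \<open>Call a node s of an \<alpha>-tree T good if some \<alpha>-subtree of T with stem s has its body
  inside the open set. Goodness is inherited from successors: if U-many one-point extensions of s
  are good, the union of their witnessing subtrees shows that s is good. So if the stem of T is
  bad, then U-many successors of every bad node are bad, and the bad nodes form an \<alpha>-subtree S
  with the same stem. Its body misses the open set: a branch X of S lying in the open set lies in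
  a basic open set [T'] contained in it, and intersecting S and T' above a long enough initial
  segment u of X witnesses that u is good.\<close>

section \<open>Initial segments\<close>

lemma initseg_iff:
  "s \<sqsubseteq> X \<longleftrightarrow> finite s \<and> s \<subseteq> X \<and> (\<forall>x\<in>s. \<forall>y\<in>X. y < x \<longrightarrow> y \<in> s)"
proof
  assume "s \<sqsubseteq> X"
  then show "finite s \<and> s \<subseteq> X \<and> (\<forall>x\<in>s. \<forall>y\<in>X. y < x \<longrightarrow> y \<in> s)"
    unfolding initseg_def by auto
next
  assume s: "finite s \<and> s \<subseteq> X \<and> (\<forall>x\<in>s. \<forall>y\<in>X. y < x \<longrightarrow> y \<in> s)"
  show "s \<sqsubseteq> X"
  proof (cases "s = {}")
    case True
    then show ?thesis
      unfolding initseg_def by auto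
  next
    case False
    with s have "Max s \<in> s"
      by simp
    with s have "s = {j \<in> X. j \<le> Max s}"
      by (auto intro: le_neq_implies_less)
    with s show ?thesis
      unfolding initseg_def less_Suc_eq_le[symmetric] by blast
  qed
qed

lemma initseg_finite: "s \<sqsubseteq> X \<Longrightarrow> finite s"
  unfolding initseg_def by blast

lemma initseg_subset: "s \<sqsubseteq> X \<Longrightarrow> s \<subseteq> X"
  unfolding initseg_iff by blast

lemma initseg_refl: "finite s \<Longrightarrow> s \<sqsubseteq> s"
  unfolding initseg_iff by blast

lemma initseg_trans: "r \<sqsubseteq> s \<Longrightarrow> s \<sqsubseteq> t \<Longrightarrow> r \<sqsubseteq> t"
  unfolding initseg_iff by blast

lemma initseg_antisym: "s \<sqsubseteq> t \<Longrightarrow> t \<sqsubseteq> s \<Longrightarrow> s = t"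
  unfolding initseg_iff by blast

lemma initseg_of_subset: "r \<sqsubseteq> X \<Longrightarrow> r \<subseteq> s \<Longrightarrow> s \<subseteq> X \<Longrightarrow> r \<sqsubseteq> s"
  unfolding initseg_iff by blast

lemma initseg_linear:
  assumes "r \<sqsubseteq> X" "s \<sqsubseteq> X"
  shows "r \<sqsubseteq> s \<or> s \<sqsubseteq> r"
proof -
  obtain i k where "r = {j \<in> X. j < i}" "s = {j \<in> X. j < k}"
    using assms unfolding initseg_def by blast
  then have "r \<subseteq> s \<or> s \<subseteq> r"
    using nat_le_linear[of i k] by force
  with assms show ?thesis
    using initseg_of_subset initseg_subset by blast
qed

lemma initseg_insert: "finite s \<Longrightarrow> \<forall>y\<in>s. y < x \<Longrightarrow> s \<sqsubseteq> insert x s"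
  unfolding initseg_iff by auto

lemma initseg_insert_cases:
  assumes "t \<sqsubseteq> insert x s" "finite s" "\<forall>y\<in>s. y < x"
  shows "t \<sqsubseteq> s \<or> t = insert x s"
proof (cases "x \<in> t")
  case True
  with assms have "s \<subseteq> t"
    unfolding initseg_iff by blast
  with True assms(1) show ?thesis
    using initseg_subset by blast
next
  case False
  with assms(1) have "t \<subseteq> s"
    using initseg_subset by blast
  with assms(1) show ?thesis
    using initseg_of_subset by blast
qed

lemma initseg_card_le: "r \<sqsubseteq> s \<Longrightarrow> finite s \<Longrightarrow> card r \<le> card s"
  by (simp add: card_mono initseg_subset)

lemma initseg_eq_if_card_eq:
  assumes "r \<sqsubseteq> X" "s \<sqsubseteq> X" "card r = card s"
  shows "r = s"
  using initseg_linear[OF assms(1,2)]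
proof
  assume "r \<sqsubseteq> s"
  then show ?thesis
    using card_subset_eq[OF initseg_finite[OF assms(2)]] initseg_subset assms(3) by blast
next
  assume "s \<sqsubseteq> r"
  then show ?thesis
    using card_subset_eq[OF initseg_finite[OF assms(1)]] initseg_subset assms(3) by metis
qed

lemma exists_initseg_card_gt:
  assumes "infinite X"
  obtains u where "u \<sqsubseteq> X" "n < card u"
proof -
  obtain F where F: "F \<subseteq> X" "finite F" "card F = Suc n"
    using infinite_arbitrarily_large[OF assms] by blast
  define u where "u = {j \<in> X. j < Suc (Max F)}"
  have "F \<subseteq> u"
    using F by (auto simp: u_def less_Suc_eq_le)
  then have "n < card u"
    using F card_mono[of u F] by (simp add: u_def)
  moreover have "u \<sqsubseteq> X"
    unfolding initseg_def u_def by auto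
  ultimately show thesis
    using that by blast
qed

section \<open>Ultrafilters and nonstandard hypernaturals\<close>

lemma ultrafilter_mono: "nonprincipal_ultrafilter U \<Longrightarrow> A \<in> U \<Longrightarrow> A \<subseteq> B \<Longrightarrow> B \<in> U"
  unfolding nonprincipal_ultrafilter_def by blast

lemma ultrafilter_Int: "nonprincipal_ultrafilter U \<Longrightarrow> A \<in> U \<Longrightarrow> B \<in> U \<Longrightarrow> A \<inter> B \<in> U"
  unfolding nonprincipal_ultrafilter_def by blast

lemma ultrafilter_Compl: "nonprincipal_ultrafilter U \<Longrightarrow> A \<notin> U \<Longrightarrow> - A \<in> U"
  unfolding nonprincipal_ultrafilter_def by blast

lemma ultrafilter_nonempty: "nonprincipal_ultrafilter U \<Longrightarrow> A \<in> U \<Longrightarrow> A \<noteq> {}"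
  unfolding nonprincipal_ultrafilter_def by blast

lemma nonstandard_hypnat_not_bounded:
  assumes U: "nonprincipal_ultrafilter U" and f: "nonstandard_hypnat U f"
  shows "{i. f i \<le> n} \<notin> U"
proof (induction n)
  case 0
  with f show ?case
    unfolding nonstandard_hypnat_def by simp
next
  case (Suc n)
  show ?case
  proof
    assume "{i. f i \<le> Suc n} \<in> U"
    with Suc have "{i. f i \<le> Suc n} \<inter> - {i. f i \<le> n} \<in> U"
      using ultrafilter_Int[OF U] ultrafilter_Compl[OF U] by blast
    then have "{i. f i = Suc n} \<in> U"
      by (rule ultrafilter_mono[OF U]) auto
    with f show False
      unfolding nonstandard_hypnat_def by blast
  qed
qed

lemma nonstandard_hypnat_above_finite:
  assumes U: "nonprincipal_ultrafilter U" and f: "nonstandard_hypnat U f" and "finite s"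
  shows "{i. \<forall>y\<in>s. y < f i} \<in> U"
proof -
  have "- {i. f i \<le> \<Sum>s} \<subseteq> {i. \<forall>y\<in>s. y < f i}"
    using member_le_sum[of _ s id] \<open>finite s\<close> by fastforce
  then show ?thesis
    using ultrafilter_mono[OF U ultrafilter_Compl[OF U nonstandard_hypnat_not_bounded[OF U f]]]
    by blast
qed

lemma nonstandard_hypnat_two_values:
  assumes U: "nonprincipal_ultrafilter U" and f: "nonstandard_hypnat U f" and "A \<in> U"
  obtains i j where "i \<in> A" "j \<in> A" "f i \<noteq> f j"
proof -
  obtain i where i: "i \<in> A"
    using ultrafilter_nonempty[OF U \<open>A \<in> U\<close>] by blast
  have "\<not> A \<subseteq> {j. f j = f i}"
    using f ultrafilter_mono[OF U \<open>A \<in> U\<close>] unfolding nonstandard_hypnat_def by blast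
  with i that show thesis
    by blast
qed

section \<open>Trees, stems and bodies\<close>

lemma tree_node_finite: "is_tree T \<Longrightarrow> t \<in> T \<Longrightarrow> finite t"
  unfolding is_tree_def by blast

lemma tree_initseg_closed: "is_tree T \<Longrightarrow> t \<in> T \<Longrightarrow> s \<sqsubseteq> t \<Longrightarrow> s \<in> T"
  unfolding is_tree_def by blast

lemma is_tree_subset:
  assumes "is_tree T" "S \<subseteq> T" "s \<in> S" "\<And>t r. t \<in> S \<Longrightarrow> r \<sqsubseteq> t \<Longrightarrow> r \<in> S"
  shows "is_tree S"
  using assms unfolding is_tree_def by blast

lemma is_stem_in: "is_stem T s \<Longrightarrow> s \<in> T"
  unfolding is_stem_def by blast

lemma is_stem_comparable: "is_stem T s \<Longrightarrow> t \<in> T \<Longrightarrow> s \<sqsubseteq> t \<or> t \<sqsubseteq> s"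
  unfolding is_stem_def by blast

lemma stem_eq:
  assumes "is_stem T s"
  shows "stem T = s"
  unfolding stem_def
proof (rule the_equality[where P = "is_stem T", OF assms])
  fix s' assume s': "is_stem T s'"
  have maximal: "r \<sqsubseteq> t" if "is_stem T r" "is_stem T t" for r t
    using that unfolding is_stem_def by blast
  show "s' = s"
    using maximal[OF s' assms] maximal[OF assms s'] by (rule initseg_antisym)
qed

lemma body_mono: "S \<subseteq> T \<Longrightarrow> body S \<subseteq> body T"
  unfolding body_def by blast

lemma body_initseg_above_stem:
  assumes "X \<in> body T" "is_stem T s" "finite s" "u \<sqsubseteq> X" "card s < card u"
  shows "u \<in> T" "s \<sqsubseteq> u"
proof -
  show "u \<in> T"
    using assms(1,4) initseg_finite[OF assms(4)] unfolding body_def by blast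
  moreover have "\<not> u \<sqsubseteq> s"
    using initseg_card_le[OF _ assms(3), of u] assms(5) by linarith
  ultimately show "s \<sqsubseteq> u"
    using is_stem_comparable[OF assms(2)] by blast
qed

text \<open>A node comparable with every node but not below s would extend both successors,
  which are incomparable.\<close>

lemma is_stem_if_two_successors:
  assumes "s \<in> T" "\<forall>t\<in>T. s \<sqsubseteq> t \<or> t \<sqsubseteq> s" "finite s"
    and "insert x s \<in> T" "insert y s \<in> T" "x \<noteq> y" "\<forall>z\<in>s. z < x" "\<forall>z\<in>s. z < y"
  shows "is_stem T s"
proof -
  have "s' \<sqsubseteq> s" if s': "s' \<in> T" "\<forall>t\<in>T. s' \<sqsubseteq> t \<or> t \<sqsubseteq> s'" for s'
  proof (rule ccontr)
    assume "\<not> s' \<sqsubseteq> s"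
    have succ_below: "insert z s \<sqsubseteq> s'" if "insert z s \<in> T" "\<forall>w\<in>s. w < z" for z
    proof -
      have "s' \<sqsubseteq> insert z s \<longrightarrow> s' = insert z s"
        using initseg_insert_cases[OF _ \<open>finite s\<close> that(2)] \<open>\<not> s' \<sqsubseteq> s\<close> by blast
      then show ?thesis
        using s'(2) that(1) initseg_refl[of "insert z s"] \<open>finite s\<close> by auto
    qed
    have "insert x s \<subseteq> insert y s \<or> insert y s \<subseteq> insert x s"
      using initseg_linear[OF succ_below[OF assms(4,7)] succ_below[OF assms(5,8)]] initseg_subset
      by blast
    moreover have "x \<notin> s" "y \<notin> s"
      using assms(7,8) by auto
    ultimately show False
      using assms(6) by blast
  qed
  with assms(1,2) show ?thesis
    unfolding is_stem_def by blast
qed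

text \<open>Since
  (\<phi> s)[\<alpha>] is nonstandard, the requirement \<open>max s < \<phi> s i\<close> costs nothing modulo U.\<close>

definition successor_indices :: "(nat set \<Rightarrow> nat \<Rightarrow> nat) \<Rightarrow> nat set set \<Rightarrow> nat set \<Rightarrow> nat set" where
  "successor_indices \<phi> T t = {i. insert (\<phi> t i) t \<in> T \<and> (\<forall>y\<in>t. y < \<phi> t i)}"

lemma successor_indices_mono: "S \<subseteq> T \<Longrightarrow> successor_indices \<phi> S t \<subseteq> successor_indices \<phi> T t"
  unfolding successor_indices_def by blast

lemma alpha_tree_is_tree: "alpha_tree U \<phi> T \<Longrightarrow> is_tree T"
  unfolding alpha_tree_def by blast

lemma alpha_tree_is_stem:
  assumes "alpha_tree U \<phi> T"
  shows "is_stem T (stem T)"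
proof -
  obtain s where "is_stem T s"
    using assms unfolding alpha_tree_def has_stem_def by blast
  with stem_eq show ?thesis
    by simp
qed

lemma alpha_tree_with_stem: "alpha_tree U \<phi> T \<Longrightarrow> stem T = s \<Longrightarrow> is_tree T \<and> is_stem T s"
  using alpha_tree_is_tree alpha_tree_is_stem by blast

lemma alpha_Ellentuck_open_cover:
  assumes "alpha_Ellentuck_open U \<phi> \<O>" "X \<in> \<O>"
  obtains T where "alpha_tree U \<phi> T" "X \<in> body T" "body T \<subseteq> \<O>"
  using assms unfolding alpha_Ellentuck_open_def by blast

section \<open>Amalgams and persistent parts of trees\<close>

lemma is_stem_insert_cases:
  assumes "is_stem W (insert x s)" "finite s" "\<forall>y\<in>s. y < x" "t \<in> W"
  shows "t \<sqsubseteq> s \<or> insert x s \<sqsubseteq> t"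
  using is_stem_comparable[OF assms(1,4)] initseg_insert_cases[OF _ assms(2,3), of t] by blast

definition amalgam :: "nat set \<Rightarrow> nat set \<Rightarrow> (nat \<Rightarrow> nat set set) \<Rightarrow> nat set set" where
  "amalgam s X W = {t. t \<sqsubseteq> s} \<union> (\<Union>x\<in>X. W x)"

context
  fixes s :: "nat set" and X :: "nat set" and W :: "nat \<Rightarrow> nat set set"
  assumes fin: "finite s"
    and W: "\<And>x. x \<in> X \<Longrightarrow> is_tree (W x) \<and> is_stem (W x) (insert x s) \<and> (\<forall>y\<in>s. y < x)"
begin

lemma amalgam_cases:
  assumes "t \<in> amalgam s X W"
  shows "t \<sqsubseteq> s \<or> (\<exists>x\<in>X. t \<in> W x \<and> insert x s \<sqsubseteq> t)"
  using assms W is_stem_insert_cases[OF _ fin] unfolding amalgam_def by blast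

lemma amalgam_comparable: "t \<in> amalgam s X W \<Longrightarrow> s \<sqsubseteq> t \<or> t \<sqsubseteq> s"
  using amalgam_cases W initseg_trans[OF initseg_insert[OF fin]] by blast

lemma is_tree_amalgam: "is_tree (amalgam s X W)"
proof -
  have "finite t \<and> (\<forall>r. r \<sqsubseteq> t \<longrightarrow> r \<in> amalgam s X W)" if t: "t \<in> amalgam s X W" for t
  proof (cases "t \<sqsubseteq> s")
    case True
    then show ?thesis
      unfolding amalgam_def using initseg_finite[OF True] initseg_trans[OF _ True] by blast
  next
    case False
    then obtain x where x: "x \<in> X" "t \<in> W x"
      using amalgam_cases[OF t] by blast
    have "is_tree (W x)"
      using W[OF x(1)] by blast
    then show ?thesis
      unfolding amalgam_def using tree_node_finite[OF _ x(2)] tree_initseg_closed[OF _ x(2)] x(1)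
      by blast
  qed
  moreover have "s \<in> amalgam s X W"
    unfolding amalgam_def using initseg_refl[OF fin] by blast
  ultimately show ?thesis
    unfolding is_tree_def by blast
qed

text \<open>A branch of the amalgam is pinned to a single W x by its initial segment of size
  card s + 1.\<close>

lemma body_amalgam_subset: "body (amalgam s X W) \<subseteq> (\<Union>x\<in>X. body (W x))"
proof
  fix Y
  assume Y: "Y \<in> body (amalgam s X W)"
  have long_node: "\<exists>x\<in>X. w \<in> W x \<and> insert x s \<sqsubseteq> w" if w: "w \<sqsubseteq> Y" "card s < card w" for w
  proof -
    have "\<not> w \<sqsubseteq> s"
      using initseg_card_le[OF _ fin, of w] w(2) by linarith
    moreover have "w \<in> amalgam s X W"
      using Y w(1) initseg_finite[OF w(1)] unfolding body_def by blast
    ultimately show ?thesis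
      using amalgam_cases by blast
  qed
  have card_insert: "card (insert x s) = Suc (card s)" if "x \<in> X" for x
  proof -
    have "x \<notin> s"
      using W[OF that] by blast
    with fin show ?thesis
      by simp
  qed
  have "infinite Y"
    using Y unfolding body_def by blast
  then obtain v where v: "v \<sqsubseteq> Y" "card s < card v"
    by (rule exists_initseg_card_gt)
  then obtain x where x: "x \<in> X" "v \<in> W x" "insert x s \<sqsubseteq> v"
    using long_node by blast
  have "w \<in> W x" if w: "w \<sqsubseteq> Y" for w
  proof (cases "w \<sqsubseteq> v")
    case True
    then show ?thesis
      using W[OF x(1)] x(2) tree_initseg_closed by blast
  next
    case False
    then have "v \<sqsubseteq> w"
      using initseg_linear[OF w v(1)] by blast
    then have "card s < card w"
      using initseg_card_le[OF _ initseg_finite[OF w]] v(2) by (meson less_le_trans)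
    then obtain y where y: "y \<in> X" "w \<in> W y" "insert y s \<sqsubseteq> w"
      using long_node[OF w] by blast
    have "insert y s = insert x s"
      using initseg_eq_if_card_eq[OF initseg_trans[OF y(3) w] initseg_trans[OF x(3) v(1)]]
        card_insert[OF x(1)] card_insert[OF y(1)] by simp
    moreover have "y \<notin> s"
      using W[OF y(1)] by blast
    ultimately have "y = x"
      by blast
    with y show ?thesis
      by simp
  qed
  then have "Y \<in> body (W x)"
    using Y unfolding body_def by blast
  with x(1) show "Y \<in> (\<Union>x\<in>X. body (W x))"
    by blast
qed

end

definition persistent_part :: "(nat set \<Rightarrow> bool) \<Rightarrow> nat set set \<Rightarrow> nat set set" where
  "persistent_part P T =
     {t \<in> T. t \<sqsubseteq> stem T \<or> (stem T \<sqsubseteq> t \<and> (\<forall>v. stem T \<sqsubseteq> v \<and> v \<sqsubseteq> t \<longrightarrow> P v))}"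

lemma persistent_part_subset: "persistent_part P T \<subseteq> T"
  unfolding persistent_part_def by blast

lemma persistent_part_property:
  assumes "P (stem T)" "t \<in> persistent_part P T" "stem T \<sqsubseteq> v" "v \<sqsubseteq> t"
  shows "P v"
proof (cases "t \<sqsubseteq> stem T")
  case True
  then have "v = stem T"
    using assms(3,4) initseg_antisym initseg_trans by metis
  with assms(1) show ?thesis
    by simp
next
  case False
  with assms(2-4) show ?thesis
    unfolding persistent_part_def by blast
qed

lemma is_tree_persistent_part:
  assumes tree: "is_tree T" and "stem T \<in> T"
  shows "is_tree (persistent_part P T)"
proof (rule is_tree_subset[OF tree persistent_part_subset])
  show "stem T \<in> persistent_part P T"
    unfolding persistent_part_def using assms(2) initseg_refl[OF tree_node_finite[OF assms]] by blast
  show "r \<in> persistent_part P T" if t: "t \<in> persistent_part P T" and r: "r \<sqsubseteq> t" for t r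
  proof -
    have "r \<in> T"
      using tree_initseg_closed[OF tree _ r] t persistent_part_subset by blast
    consider "t \<sqsubseteq> stem T" | "stem T \<sqsubseteq> t" "\<forall>v. stem T \<sqsubseteq> v \<and> v \<sqsubseteq> t \<longrightarrow> P v"
      using t unfolding persistent_part_def by blast
    then have "r \<sqsubseteq> stem T \<or> (stem T \<sqsubseteq> r \<and> (\<forall>v. stem T \<sqsubseteq> v \<and> v \<sqsubseteq> r \<longrightarrow> P v))"
    proof cases
      case 1
      then show ?thesis
        using initseg_trans[OF r] by blast
    next
      case 2
      then show ?thesis
        using initseg_linear[OF r 2(1)] initseg_trans[OF _ r] by blast
    qed
    with \<open>r \<in> T\<close> show ?thesis
      unfolding persistent_part_def by blast
  qed
qed

section \<open>Constructions of \<alpha>-trees\<close>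

locale alpha_vector =
  fixes U :: "nat set set" and \<phi> :: "nat set \<Rightarrow> nat \<Rightarrow> nat"
  assumes ultrafilter: "nonprincipal_ultrafilter U"
    and nonstandard: "finite s \<Longrightarrow> nonstandard_hypnat U (\<phi> s)"
begin

lemma alpha_tree_successor_indices:
  assumes T: "alpha_tree U \<phi> T" and "t \<in> T" "stem T \<sqsubseteq> t"
  shows "successor_indices \<phi> T t \<in> U"
proof -
  have fin: "finite t"
    using tree_node_finite[OF alpha_tree_is_tree[OF T] assms(2)] .
  have "{i. insert (\<phi> t i) t \<in> T} \<in> U"
    using T assms(2,3) unfolding alpha_tree_def restr_def by blast
  moreover have "{i. \<forall>y\<in>t. y < \<phi> t i} \<in> U"
    using nonstandard_hypnat_above_finite[OF ultrafilter nonstandard[OF fin] fin] .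
  ultimately show ?thesis
    unfolding successor_indices_def Collect_conj_eq by (rule ultrafilter_Int[OF ultrafilter])
qed

lemma alpha_tree_intro:
  assumes "is_tree S" "s \<in> S" "\<forall>t\<in>S. s \<sqsubseteq> t \<or> t \<sqsubseteq> s"
    and succ: "\<And>t. t \<in> S \<Longrightarrow> s \<sqsubseteq> t \<Longrightarrow> successor_indices \<phi> S t \<in> U"
  shows "alpha_tree U \<phi> S" "stem S = s"
proof -
  have fin: "finite s"
    using tree_node_finite assms(1,2) .
  have "successor_indices \<phi> S s \<in> U"
    using succ[OF assms(2) initseg_refl[OF fin]] .
  then obtain i j where "i \<in> successor_indices \<phi> S s" "j \<in> successor_indices \<phi> S s" "\<phi> s i \<noteq> \<phi> s j"
    using nonstandard_hypnat_two_values[OF ultrafilter nonstandard[OF fin]] by metis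
  then have stem: "is_stem S s"
    unfolding successor_indices_def using is_stem_if_two_successors[OF assms(2,3) fin] by blast
  then show "stem S = s"
    by (rule stem_eq)
  have "s \<in> restr S s"
    unfolding restr_def using assms(2) initseg_refl[OF fin] by blast
  moreover have "{i. insert (\<phi> t i) t \<in> S} \<in> U" if "t \<in> restr S s" for t
  proof (rule ultrafilter_mono[OF ultrafilter])
    show "successor_indices \<phi> S t \<in> U"
      using that succ unfolding restr_def by blast
    show "successor_indices \<phi> S t \<subseteq> {i. insert (\<phi> t i) t \<in> S}"
      unfolding successor_indices_def by blast
  qed
  ultimately show "alpha_tree U \<phi> S"
    unfolding alpha_tree_def has_stem_def using assms(1) stem \<open>stem S = s\<close> by blast
qed

lemma alpha_tree_Int_cone:
  assumes T: "alpha_tree U \<phi> T" and T': "alpha_tree U \<phi> T'"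
    and u: "u \<in> T" "u \<in> T'" "stem T \<sqsubseteq> u" "stem T' \<sqsubseteq> u"
  defines "C \<equiv> {t \<in> T \<inter> T'. t \<sqsubseteq> u \<or> u \<sqsubseteq> t}"
  shows "alpha_tree U \<phi> C" "stem C = u"
proof -
  have tree: "is_tree T" "is_tree T'"
    using T T' by (simp_all add: alpha_tree_is_tree)
  have "u \<in> C"
    unfolding C_def using u initseg_refl tree_node_finite[OF tree(1)] by blast
  moreover have "r \<in> C" if "t \<in> C" "r \<sqsubseteq> t" for t r
  proof -
    have "r \<in> T \<inter> T'"
      using that tree_initseg_closed[OF tree(1)] tree_initseg_closed[OF tree(2)]
      unfolding C_def by blast
    moreover have "r \<sqsubseteq> u \<or> u \<sqsubseteq> r"
      using that initseg_trans[OF that(2)] initseg_linear[OF that(2)] unfolding C_def by blast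
    ultimately show ?thesis
      unfolding C_def by blast
  qed
  then have "is_tree C"
    using is_tree_subset[OF tree(1) _ \<open>u \<in> C\<close>] unfolding C_def by blast
  moreover have "successor_indices \<phi> C t \<in> U" if "t \<in> C" "u \<sqsubseteq> t" for t
  proof (rule ultrafilter_mono[OF ultrafilter])
    have "t \<in> T" "t \<in> T'"
      using that(1) unfolding C_def by blast+
    then show "successor_indices \<phi> T t \<inter> successor_indices \<phi> T' t \<in> U"
      using ultrafilter_Int[OF ultrafilter] alpha_tree_successor_indices[OF T] 
        alpha_tree_successor_indices[OF T'] initseg_trans[OF _ that(2)] u(3,4) by blast
    show "successor_indices \<phi> T t \<inter> successor_indices \<phi> T' t \<subseteq> successor_indices \<phi> C t"
      using initseg_trans[OF that(2) initseg_insert] tree_node_finite[OF tree(1) \<open>t \<in> T\<close>]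
      unfolding successor_indices_def C_def by blast
  qed
  moreover have "\<forall>t\<in>C. u \<sqsubseteq> t \<or> t \<sqsubseteq> u"
    unfolding C_def by blast
  ultimately show "alpha_tree U \<phi> C" "stem C = u"
    using alpha_tree_intro \<open>u \<in> C\<close> by blast+
qed

lemma alpha_tree_persistent_part:
  assumes T: "alpha_tree U \<phi> T" and "P (stem T)"
    and persistent: "\<And>t. t \<in> T \<Longrightarrow> stem T \<sqsubseteq> t \<Longrightarrow> P t \<Longrightarrow> {i. P (insert (\<phi> t i) t)} \<in> U"
  shows "alpha_tree U \<phi> (persistent_part P T)" "stem (persistent_part P T) = stem T"
proof -
  define r where "r = stem T"
  define S where "S = persistent_part P T"
  have tree: "is_tree T"
    using T by (rule alpha_tree_is_tree)
  have "r \<in> T"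
    unfolding r_def using is_stem_in[OF alpha_tree_is_stem[OF T]] .
  then have "r \<in> S"
    unfolding S_def persistent_part_def r_def using initseg_refl tree_node_finite[OF tree] by blast
  moreover have "is_tree S"
    unfolding S_def r_def using is_tree_persistent_part[OF tree \<open>r \<in> T\<close>[unfolded r_def]] .
  moreover have "successor_indices \<phi> S t \<in> U" if t: "t \<in> S" "r \<sqsubseteq> t" for t
  proof (rule ultrafilter_mono[OF ultrafilter])
    have "t \<in> T" "finite t"
      using t(1) persistent_part_subset tree_node_finite[OF tree] unfolding S_def by blast+
    moreover have "P t"
      using persistent_part_property[where P = P, OF \<open>P (stem T)\<close>] t
        initseg_refl[OF \<open>finite t\<close>]
      unfolding S_def r_def by blast
    ultimately show "successor_indices \<phi> T t \<inter> {i. P (insert (\<phi> t i) t)} \<in> U"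
      using ultrafilter_Int[OF ultrafilter] alpha_tree_successor_indices[OF T] persistent t(2)
      unfolding r_def by blast
    show "successor_indices \<phi> T t \<inter> {i. P (insert (\<phi> t i) t)} \<subseteq> successor_indices \<phi> S t"
    proof
      fix i
      assume "i \<in> successor_indices \<phi> T t \<inter> {i. P (insert (\<phi> t i) t)}"
      then have i: "insert (\<phi> t i) t \<in> T" "\<forall>y\<in>t. y < \<phi> t i" "P (insert (\<phi> t i) t)"
        unfolding successor_indices_def by auto
      have "P v" if "r \<sqsubseteq> v" "v \<sqsubseteq> insert (\<phi> t i) t" for v
        using initseg_insert_cases[OF that(2) \<open>finite t\<close> i(2)] i(3)
          persistent_part_property[where P = P,
            OF \<open>P (stem T)\<close> t(1)[unfolded S_def] that(1)[unfolded r_def]]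
        by blast
      moreover have "r \<sqsubseteq> insert (\<phi> t i) t"
        using initseg_trans[OF t(2) initseg_insert[OF \<open>finite t\<close> i(2)]] .
      ultimately show "i \<in> successor_indices \<phi> S t"
        unfolding successor_indices_def S_def persistent_part_def r_def using i by blast
    qed
  qed
  moreover have "\<forall>t\<in>S. r \<sqsubseteq> t \<or> t \<sqsubseteq> r"
    unfolding S_def persistent_part_def r_def by blast
  ultimately show "alpha_tree U \<phi> (persistent_part P T)" "stem (persistent_part P T) = stem T"
    using alpha_tree_intro unfolding S_def r_def by blast+
qed

lemma alpha_tree_amalgam:
  assumes fin: "finite s" and many: "{i. \<phi> s i \<in> X} \<in> U"
    and W: "\<And>x. x \<in> X \<Longrightarrow> alpha_tree U \<phi> (W x) \<and> stem (W x) = insert x s \<and> (\<forall>y\<in>s. y < x)"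
  shows "alpha_tree U \<phi> (amalgam s X W)" "stem (amalgam s X W) = s"
proof -
  have W_tree: "is_tree (W x) \<and> is_stem (W x) (insert x s) \<and> (\<forall>y\<in>s. y < x)" if "x \<in> X" for x
    using W[OF that] alpha_tree_with_stem by blast
  have "successor_indices \<phi> (amalgam s X W) t \<in> U" if t: "t \<in> amalgam s X W" "s \<sqsubseteq> t" for t
  proof (cases "t \<sqsubseteq> s")
    case True
    then have "t = s"
      using t(2) initseg_antisym by blast
    have "{i. \<phi> s i \<in> X} \<subseteq> successor_indices \<phi> (amalgam s X W) s"
      unfolding successor_indices_def amalgam_def using W_tree is_stem_in by blast
    then have "successor_indices \<phi> (amalgam s X W) s \<in> U"
      by (rule ultrafilter_mono[OF ultrafilter many])
    with \<open>t = s\<close> show ?thesis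
      by simp
  next
    case False
    then obtain x where x: "x \<in> X" "t \<in> W x" "insert x s \<sqsubseteq> t"
      using amalgam_cases[OF fin W_tree t(1)] by blast
    have "successor_indices \<phi> (W x) t \<in> U"
      using alpha_tree_successor_indices[of "W x" t] W[OF x(1)] x(2,3) by simp
    moreover have "W x \<subseteq> amalgam s X W"
      unfolding amalgam_def using x(1) by blast
    ultimately show ?thesis
      using ultrafilter_mono[OF ultrafilter] successor_indices_mono by metis
  qed
  moreover have "s \<in> amalgam s X W"
    unfolding amalgam_def using initseg_refl[OF fin] by blast
  ultimately show "alpha_tree U \<phi> (amalgam s X W)" "stem (amalgam s X W) = s"
    using alpha_tree_intro[OF is_tree_amalgam[OF fin W_tree]] amalgam_comparable[OF fin W_tree]
    by blast+
qed

section \<open>Good nodes\<close>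

definition good_node :: "nat set set \<Rightarrow> nat set set \<Rightarrow> nat set \<Rightarrow> bool" where
  "good_node \<O> T s \<longleftrightarrow> (\<exists>S. alpha_tree U \<phi> S \<and> S \<subseteq> T \<and> stem S = s \<and> body S \<subseteq> \<O>)"

lemma good_node_mono: "good_node \<O> S s \<Longrightarrow> S \<subseteq> T \<Longrightarrow> good_node \<O> T s"
  unfolding good_node_def by blast

lemma good_node_if_many_good_successors:
  assumes T: "alpha_tree U \<phi> T" and "t \<in> T" "stem T \<sqsubseteq> t"
    and many: "{i. good_node \<O> T (insert (\<phi> t i) t)} \<in> U"
  shows "good_node \<O> T t"
proof -
  have fin: "finite t"
    using tree_node_finite[OF alpha_tree_is_tree[OF T] \<open>t \<in> T\<close>] .
  define A where "A = successor_indices \<phi> T t \<inter> {i. good_node \<O> T (insert (\<phi> t i) t)}"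
  have "A \<in> U"
    unfolding A_def
    using ultrafilter_Int[OF ultrafilter alpha_tree_successor_indices[OF T assms(2,3)] many] .
  define X where "X = \<phi> t ` A"
  have "\<forall>x\<in>X. \<exists>W. (alpha_tree U \<phi> W \<and> stem W = insert x t \<and> (\<forall>y\<in>t. y < x)) \<and> W \<subseteq> T \<and> body W \<subseteq> \<O>"
    unfolding X_def A_def successor_indices_def good_node_def by blast
  then obtain W where W: "\<And>x. x \<in> X \<Longrightarrow> alpha_tree U \<phi> (W x) \<and> stem (W x) = insert x t \<and> (\<forall>y\<in>t. y < x)"
    and W_sub: "\<And>x. x \<in> X \<Longrightarrow> W x \<subseteq> T \<and> body (W x) \<subseteq> \<O>"
    by (metis bchoice)
  have W_tree: "is_tree (W x) \<and> is_stem (W x) (insert x t) \<and> (\<forall>y\<in>t. y < x)" if "x \<in> X" for x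
    using W[OF that] alpha_tree_with_stem by blast
  define S where "S = amalgam t X W"
  have "{i. \<phi> t i \<in> X} \<in> U"
    by (rule ultrafilter_mono[OF ultrafilter \<open>A \<in> U\<close>]) (auto simp: X_def)
  then have "alpha_tree U \<phi> S" "stem S = t"
    unfolding S_def using alpha_tree_amalgam[OF fin _ W] by blast+
  moreover have "S \<subseteq> T"
  proof -
    have "{r. r \<sqsubseteq> t} \<subseteq> T"
      using tree_initseg_closed[OF alpha_tree_is_tree[OF T] \<open>t \<in> T\<close>] by blast
    with W_sub show ?thesis
      unfolding S_def amalgam_def by blast
  qed
  moreover have "body S \<subseteq> \<O>"
  proof -
    have "body S \<subseteq> (\<Union>x\<in>X. body (W x))"
      unfolding S_def by (rule body_amalgam_subset[OF fin W_tree])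
    also have "\<dots> \<subseteq> \<O>"
      using W_sub by blast
    finally show ?thesis .
  qed
  ultimately show ?thesis
    unfolding good_node_def by blast
qed

lemma bad_node_many_bad_successors:
  assumes "alpha_tree U \<phi> T" "t \<in> T" "stem T \<sqsubseteq> t" "\<not> good_node \<O> T t"
  shows "{i. \<not> good_node \<O> T (insert (\<phi> t i) t)} \<in> U"
proof -
  have "{i. good_node \<O> T (insert (\<phi> t i) t)} \<notin> U"
    using good_node_if_many_good_successors[OF assms(1-3)] assms(4) by blast
  then show ?thesis
    unfolding Collect_neg_eq by (rule ultrafilter_Compl[OF ultrafilter])
qed

lemma good_node_if_body_meets_open:
  assumes "alpha_Ellentuck_open U \<phi> \<O>" and S: "alpha_tree U \<phi> S" and "X \<in> body S" "X \<in> \<O>"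
  obtains u where "u \<in> S" "stem S \<sqsubseteq> u" "good_node \<O> S u"
proof -
  obtain T where T: "alpha_tree U \<phi> T" "X \<in> body T" "body T \<subseteq> \<O>"
    using alpha_Ellentuck_open_cover[OF assms(1,4)] .
  have stems: "is_stem S (stem S)" "is_stem T (stem T)"
    using S T(1) by (simp_all add: alpha_tree_is_stem)
  have fin: "finite (stem S)" "finite (stem T)"
    using tree_node_finite[OF alpha_tree_is_tree[OF S] is_stem_in[OF stems(1)]]
      tree_node_finite[OF alpha_tree_is_tree[OF T(1)] is_stem_in[OF stems(2)]] .
  have "infinite X"
    using T(2) unfolding body_def by blast
  then obtain u where u: "u \<sqsubseteq> X" "card (stem S) + card (stem T) < card u"
    by (rule exists_initseg_card_gt)
  have u_nodes: "u \<in> S" "u \<in> T" "stem S \<sqsubseteq> u" "stem T \<sqsubseteq> u"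
    using body_initseg_above_stem[OF \<open>X \<in> body S\<close> stems(1) fin(1) u(1)]
      body_initseg_above_stem[OF T(2) stems(2) fin(2) u(1)] u(2) by simp_all
  define C where "C = {t \<in> S \<inter> T. t \<sqsubseteq> u \<or> u \<sqsubseteq> t}"
  have "alpha_tree U \<phi> C" "stem C = u"
    unfolding C_def by (fact alpha_tree_Int_cone[OF S T(1) u_nodes])+
  moreover have "C \<subseteq> S" "body C \<subseteq> \<O>"
    using body_mono[of C T] T(3) unfolding C_def by blast+
  ultimately have "good_node \<O> S u"
    unfolding good_node_def by blast
  with u_nodes(1,3) show thesis
    by (rule that)
qed

theorem alpha_Ramsey_if_alpha_Ellentuck_open:
  assumes "alpha_Ellentuck_open U \<phi> \<O>"
  shows "alpha_Ramsey U \<phi> \<O>"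
  unfolding alpha_Ramsey_def
proof (intro allI impI)
  fix T
  assume T: "alpha_tree U \<phi> T"
  show "\<exists>S. alpha_tree U \<phi> S \<and> S \<subseteq> T \<and> stem S = stem T \<and> (body S \<subseteq> \<O> \<or> body S \<inter> \<O> = {})"
  proof (cases "good_node \<O> T (stem T)")
    case True
    then show ?thesis
      unfolding good_node_def by blast
  next
    case False
    define S where "S = persistent_part (\<lambda>t. \<not> good_node \<O> T t) T"
    have S: "alpha_tree U \<phi> S" "stem S = stem T"
      unfolding S_def
      using alpha_tree_persistent_part[where P = "\<lambda>t. \<not> good_node \<O> T t", OF T False
          bad_node_many_bad_successors[OF T]]
      by blast+
    have "S \<subseteq> T"
      unfolding S_def by (rule persistent_part_subset)
    have bad: "\<not> good_node \<O> T t" if "t \<in> S" "stem T \<sqsubseteq> t" for t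
      using persistent_part_property[where P = "\<lambda>t. \<not> good_node \<O> T t",
          OF False that[unfolded S_def]] initseg_refl tree_node_finite[OF alpha_tree_is_tree[OF S(1)] that(1)] by blast
    have "body S \<inter> \<O> = {}"
    proof (rule ccontr)
      assume "body S \<inter> \<O> \<noteq> {}"
      then obtain u where "u \<in> S" "stem S \<sqsubseteq> u" "good_node \<O> S u"
        using good_node_if_body_meets_open[OF assms S(1)] by blast
      with S(2) have "\<not> good_node \<O> T u"
        using bad by simp
      with \<open>good_node \<O> S u\<close> show False
        using good_node_mono[OF _ \<open>S \<subseteq> T\<close>] by blast
    qed
    with S \<open>S \<subseteq> T\<close> show ?thesis
      by blast
  qed
qed

end

theorem mainTheorem20:
  fixes U :: "nat set set" and \<phi> :: "nat set \<Rightarrow> nat \<Rightarrow> nat" and \<O> :: "nat set set"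
  assumes "nonprincipal_ultrafilter U"
    and "\<forall>s. finite s \<longrightarrow> nonstandard_hypnat U (\<phi> s)"
    and "\<O> \<subseteq> {X. infinite X}"
    and "alpha_Ellentuck_open U \<phi> \<O>"
  shows "alpha_Ramsey U \<phi> \<O>"
proof -
  interpret alpha_vector U \<phi>
    using assms(1,2) by unfold_locales blast+
  show ?thesis
    using alpha_Ramsey_if_alpha_Ellentuck_open[OF assms(4)] .
qed

end
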